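(* Let $\mathcal{O}$ be the ring of integers of $\mathbb{Q}(\sqrt{-11})$ and $X=\frac12(1+\sqrt{-11})$. Then: (i) $X$ is an $\mathbb{S}[\pm1]$-generator of $\mathcal{O}$, i.e. every element of $\mathcal{O}$ can be written uniquely as a finite sum $\sum_j\alpha_jX^j$ with $\alpha_j\in\{-1,0,1\}$, and its hold is given by $1+1=-1+X-X^2$; (ii) with $R_m=\mathcal{O}/X^m\mathcal{O}$, the projective limit $\varprojlim_m R_m$ is the ring $W(\mathbb{F}_3)=\mathbb{Z}_3$.
   Context: $W(\mathbb{F}_3)$ is the ring of $3$-typical Witt vectors of $\mathbb{F}_3$, identified with the $3$-adic integers $\mathbb{Z}_3$. The hold records, for each $\xi\in\{\pm1\}$, the unique representation of $\xi+1$ as such a sum; here the only nontrivial case is $1+1$. *)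

theory Defs
  imports Complex_Main "HOL-Algebra.Algebra"
begin

definition Xg :: complex where
  "Xg = (1 + \<i> * complex_of_real (sqrt 11)) / 2"

text \<open>The ring of integers of Q(sqrt(-11)), which is Z[X] (as -11 = 1 mod 4),
  realised as a subring of the complex numbers.\<close>
definition O_set :: "complex set" where
  "O_set = {of_int a + of_int b * Xg | a b :: int. True}"

definition O_ring :: "complex ring" where
  "O_ring = \<lparr>carrier = O_set, monoid.mult = (*), monoid.one = 1, ring.zero = 0, ring.add = (+)\<rparr>"

definition digit_seq :: "(nat \<Rightarrow> int) \<Rightarrow> bool" where
  "digit_seq \<alpha> \<longleftrightarrow> finite {j. \<alpha> j \<noteq> 0} \<and> (\<forall>j. \<alpha> j \<in> {-1, 0, 1})"

definition digit_val :: "(nat \<Rightarrow> int) \<Rightarrow> complex" where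
  "digit_val \<alpha> = (\<Sum>j\<in>{j. \<alpha> j \<noteq> 0}. of_int (\<alpha> j) * Xg ^ j)"

text \<open>Projective limit of the chain of quotient rings A/I_0 <- A/I_1 <- ...,
  for a decreasing chain of ideals I_m; the transition maps send a coset of
  I_(m+1) to the coset of I_m containing it, so compatibility is inclusion.\<close>
definition quot_limit :: "('a, 'b) ring_scheme \<Rightarrow> (nat \<Rightarrow> 'a set) \<Rightarrow> (nat \<Rightarrow> 'a set) ring" where
  "quot_limit A I =
    \<lparr>carrier = {f. (\<forall>m. f m \<in> carrier (A Quot (I m))) \<and> (\<forall>m. f (Suc m) \<subseteq> f m)},
     monoid.mult = (\<lambda>f g m. f m \<otimes>\<^bsub>A Quot (I m)\<^esub> g m),
     monoid.one = (\<lambda>m. \<one>\<^bsub>A Quot (I m)\<^esub>),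
     ring.zero = (\<lambda>m. \<zero>\<^bsub>A Quot (I m)\<^esub>),
     ring.add = (\<lambda>f g m. f m \<oplus>\<^bsub>A Quot (I m)\<^esub> g m)\<rparr>"

text \<open>The 3-adic integers Z_3 = W(F_3), as the projective limit of Z/3^m Z.\<close>
definition Z3_ring :: "(nat \<Rightarrow> int set) ring" where
  "Z3_ring = quot_limit \<Z> (\<lambda>m. PIdl\<^bsub>\<Z>\<^esub> (3 ^ m))"

end

theory Submission
  imports Defs "HOL-Library.Nat_Bijection"
begin

(*
  X is a root of t^2 - t + 3, so O = Z[X] and X (1 - X) = 3. Modulo X every element of O is
  congruent to an integer, and an integer is divisible by X only if it is divisible by 3; hence
  O/XO = F_3 with representatives -1, 0, 1. Writing z = d + X w with d the digit of z mod X
  gives uniqueness of expansions by peeling off one digit at a time, and existence by induction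
  on the norm N(z) = |z|^2: since N(X) = 3, N(w) < N(z) as soon as N(z) >= 2.
  Since 1 - X is a unit modulo X, the same two facts hold modulo X^m and 3^m: an integer lies in
  X^m O iff 3^m divides it, and every class of O/X^m O contains an integer. So the inclusion
  Z -> O induces compatible isomorphisms Z/3^m = O/X^m O, and the projective limits agree.
*)

section \<open>Projective limits of quotient rings\<close>

lemma quot_limit_componentwise_bij:
  assumes bij: "\<And>m. bij_betw (\<phi> m) (carrier (A Quot I m)) (carrier (B Quot J m))"
    and mono_iff: "\<And>m C' C. C' \<in> carrier (A Quot I (Suc m)) \<Longrightarrow> C \<in> carrier (A Quot I m) \<Longrightarrow>
      \<phi> (Suc m) C' \<subseteq> \<phi> m C \<longleftrightarrow> C' \<subseteq> C"
  shows "bij_betw (\<lambda>g m. \<phi> m (g m)) (carrier (quot_limit A I)) (carrier (quot_limit B J))"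
proof (rule bij_betw_imageI)
  show "inj_on (\<lambda>g m. \<phi> m (g m)) (carrier (quot_limit A I))"
  proof (rule inj_onI)
    fix g g' assume g: "g \<in> carrier (quot_limit A I)" and g': "g' \<in> carrier (quot_limit A I)"
      and eq: "(\<lambda>m. \<phi> m (g m)) = (\<lambda>m. \<phi> m (g' m))"
    show "g = g'"
    proof
      fix m
      have "g m \<in> carrier (A Quot I m)" "g' m \<in> carrier (A Quot I m)"
        using g g' by (auto simp: quot_limit_def)
      moreover have "\<phi> m (g m) = \<phi> m (g' m)"
        using eq by meson
      ultimately show "g m = g' m"
        using bij[of m] by (auto simp: bij_betw_def dest: inj_onD)
    qed
  qed
  show "(\<lambda>g m. \<phi> m (g m)) ` carrier (quot_limit A I) = carrier (quot_limit B J)"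
  proof
    show "(\<lambda>g m. \<phi> m (g m)) ` carrier (quot_limit A I) \<subseteq> carrier (quot_limit B J)"
    proof clarify
      fix g assume "g \<in> carrier (quot_limit A I)"
      then have "g m \<in> carrier (A Quot I m)" "g (Suc m) \<subseteq> g m" for m
        by (auto simp: quot_limit_def)
      then show "(\<lambda>m. \<phi> m (g m)) \<in> carrier (quot_limit B J)"
        using bij_betw_apply[OF bij] mono_iff by (simp add: quot_limit_def)
    qed
    show "carrier (quot_limit B J) \<subseteq> (\<lambda>g m. \<phi> m (g m)) ` carrier (quot_limit A I)"
    proof
      fix f assume f: "f \<in> carrier (quot_limit B J)"
      define g where "g m = inv_into (carrier (A Quot I m)) (\<phi> m) (f m)" for m
      have g: "g m \<in> carrier (A Quot I m)" "\<phi> m (g m) = f m" for m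
        using f bij[of m] by (auto simp: g_def quot_limit_def bij_betw_def inv_into_into f_inv_into_f)
      have "g (Suc m) \<subseteq> g m" for m
        using f mono_iff[OF g(1) g(1)] by (simp add: g(2) quot_limit_def)
      with g(1) have "g \<in> carrier (quot_limit A I)"
        by (simp add: quot_limit_def)
      then show "f \<in> (\<lambda>g m. \<phi> m (g m)) ` carrier (quot_limit A I)"
        using g by (intro image_eqI[of _ _ g]) auto
    qed
  qed
qed

lemma quot_limit_iso_componentwise:
  assumes iso: "\<And>m. \<phi> m \<in> ring_iso (A Quot I m) (B Quot J m)"
    and mono_iff: "\<And>m C' C. C' \<in> carrier (A Quot I (Suc m)) \<Longrightarrow> C \<in> carrier (A Quot I m) \<Longrightarrow>
      \<phi> (Suc m) C' \<subseteq> \<phi> m C \<longleftrightarrow> C' \<subseteq> C"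
  shows "(\<lambda>g m. \<phi> m (g m)) \<in> ring_iso (quot_limit A I) (quot_limit B J)"
proof (rule ring_iso_memI)
  note hom = ring_iso_memE[OF iso]
  show bij: "bij_betw (\<lambda>g m. \<phi> m (g m)) (carrier (quot_limit A I)) (carrier (quot_limit B J))"
    using hom(5) mono_iff by (rule quot_limit_componentwise_bij)
  show "(\<lambda>m. \<phi> m (g m)) \<in> carrier (quot_limit B J)" if "g \<in> carrier (quot_limit A I)" for g
    using bij that by (auto simp: bij_betw_def)
  show "(\<lambda>m. \<phi> m ((g \<otimes>\<^bsub>quot_limit A I\<^esub> g') m)) =
      (\<lambda>m. \<phi> m (g m)) \<otimes>\<^bsub>quot_limit B J\<^esub> (\<lambda>m. \<phi> m (g' m))"
    and "(\<lambda>m. \<phi> m ((g \<oplus>\<^bsub>quot_limit A I\<^esub> g') m)) =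
      (\<lambda>m. \<phi> m (g m)) \<oplus>\<^bsub>quot_limit B J\<^esub> (\<lambda>m. \<phi> m (g' m))"
    if "g \<in> carrier (quot_limit A I)" "g' \<in> carrier (quot_limit A I)" for g g'
    using that hom(2,3) by (auto simp: quot_limit_def)
  show "(\<lambda>m. \<phi> m (\<one>\<^bsub>quot_limit A I\<^esub> m)) = \<one>\<^bsub>quot_limit B J\<^esub>"
    using hom(4) by (simp add: quot_limit_def)
qed

locale ideal_chain_pullback = ring_hom_ring R S h for R (structure) and S (structure) and h +
  fixes J I
  assumes ideal_J: "ideal (J m) R"
    and ideal_I: "ideal (I m) S"
    and I_decreasing: "I (Suc m) \<subseteq> I m"
    and vimage_I: "{r \<in> carrier R. h r \<in> I m} = J m"
    and rcoset_representative: "s \<in> carrier S \<Longrightarrow> \<exists>r \<in> carrier R. s \<in> I m +>\<^bsub>S\<^esub> h r"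
begin

definition quot_vimage where
  "quot_vimage C = {r \<in> carrier R. h r \<in> C}"

lemma quot_vimage_rcoset:
  assumes "r \<in> carrier R"
  shows "quot_vimage (I m +>\<^bsub>S\<^esub> h r) = J m +> r"
proof -
  interpret I: ideal "I m" S by (rule ideal_I)
  interpret J: ideal "J m" R by (rule ideal_J)
  have "h x \<in> I m +>\<^bsub>S\<^esub> h r \<longleftrightarrow> x \<in> J m +> r" if "x \<in> carrier R" for x
  proof -
    have "h (x \<ominus> r) = h x \<ominus>\<^bsub>S\<^esub> h r"
      using that assms by (simp add: R.minus_eq S.minus_eq)
    then have "h x \<in> I m +>\<^bsub>S\<^esub> h r \<longleftrightarrow> h (x \<ominus> r) \<in> I m"
      using that assms by (simp add: I.a_rcos_module_minus[OF S.ring_axioms])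
    also have "\<dots> \<longleftrightarrow> x \<ominus> r \<in> J m"
      using that assms vimage_I[of m] by auto
    finally show ?thesis
      using that assms by (simp add: J.a_rcos_module_minus[OF R.ring_axioms])
  qed
  moreover have "J m +> r \<subseteq> carrier R"
    using assms by (simp add: R.a_r_coset_subset_G J.a_subset)
  ultimately show ?thesis
    unfolding quot_vimage_def by auto
qed

lemma quot_carrier_eq: "carrier (S Quot I m) = {I m +>\<^bsub>S\<^esub> h r | r. r \<in> carrier R}"
proof -
  interpret I: ideal "I m" S by (rule ideal_I)
  have "I m +>\<^bsub>S\<^esub> s = I m +>\<^bsub>S\<^esub> h r" if "s \<in> carrier S" "s \<in> I m +>\<^bsub>S\<^esub> h r" "r \<in> carrier R" for s r
    using that by (metis I.a_repr_independence' hom_closed)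
  then show ?thesis
    using rcoset_representative by (fastforce simp: FactRing_def A_RCOSETS_def')
qed

lemma quot_vimage_iso: "quot_vimage \<in> ring_iso (S Quot I m) (R Quot J m)"
proof -
  interpret I: ideal "I m" S by (rule ideal_I)
  interpret J: ideal "J m" R by (rule ideal_J)
  have q_hom: "(\<lambda>r. I m +>\<^bsub>S\<^esub> h r) \<in> ring_hom R (S Quot I m)"
    using ring_hom_trans[OF homh I.rcos_ring_hom] by (simp add: comp_def)
  note q = ring_hom_memE[OF q_hom] and J_hom = ring_hom_memE[OF J.rcos_ring_hom]
  have R_carrier: "carrier (R Quot J m) = (+>) (J m) ` carrier R"
    by (auto simp: FactRing_def A_RCOSETS_def')
  show ?thesis
  proof (rule ring_iso_memI)
    show "quot_vimage C \<in> carrier (R Quot J m)" if "C \<in> carrier (S Quot I m)" for C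
      using that J_hom(1) by (auto simp: quot_carrier_eq quot_vimage_rcoset)
    show "quot_vimage (C \<otimes>\<^bsub>S Quot I m\<^esub> D) = quot_vimage C \<otimes>\<^bsub>R Quot J m\<^esub> quot_vimage D"
      and "quot_vimage (C \<oplus>\<^bsub>S Quot I m\<^esub> D) = quot_vimage C \<oplus>\<^bsub>R Quot J m\<^esub> quot_vimage D"
      if "C \<in> carrier (S Quot I m)" "D \<in> carrier (S Quot I m)" for C D
      using that J_hom(2,3) by (auto simp: quot_carrier_eq quot_vimage_rcoset
        simp flip: q(2,3) simp del: hom_mult hom_add)
    show "quot_vimage \<one>\<^bsub>S Quot I m\<^esub> = \<one>\<^bsub>R Quot J m\<^esub>"
      using quot_vimage_rcoset[of \<one> m] q(4) J_hom(4) by simp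
    show "bij_betw quot_vimage (carrier (S Quot I m)) (carrier (R Quot J m))"
    proof (rule bij_betw_imageI)
      show "inj_on quot_vimage (carrier (S Quot I m))"
      proof (rule inj_onI)
        fix C D assume "C \<in> carrier (S Quot I m)" "D \<in> carrier (S Quot I m)"
          and eq: "quot_vimage C = quot_vimage D"
        then obtain r r' where r: "r \<in> carrier R" "C = I m +>\<^bsub>S\<^esub> h r"
          and r': "r' \<in> carrier R" "D = I m +>\<^bsub>S\<^esub> h r'"
          by (auto simp: quot_carrier_eq)
        have "h r \<in> D"
          using eq r J.a_rcos_self[OF r(1)] quot_vimage_rcoset[OF r(1)] by (auto simp: quot_vimage_def)
        then show "C = D"
          using r r' I.a_repr_independence' by simp
      qed
      show "quot_vimage ` carrier (S Quot I m) = carrier (R Quot J m)"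
        unfolding R_carrier quot_carrier_eq by (force simp: quot_vimage_rcoset)
    qed
  qed
qed

lemma quot_vimage_subset_iff:
  assumes "C' \<in> carrier (S Quot I (Suc m))" "C \<in> carrier (S Quot I m)"
  shows "quot_vimage C' \<subseteq> quot_vimage C \<longleftrightarrow> C' \<subseteq> C"
proof
  assume sub: "quot_vimage C' \<subseteq> quot_vimage C"
  interpret I: ideal "I m" S by (rule ideal_I)
  interpret I': ideal "I (Suc m)" S by (rule ideal_I)
  obtain r' where r': "r' \<in> carrier R" "C' = I (Suc m) +>\<^bsub>S\<^esub> h r'"
    using assms(1) by (auto simp: quot_carrier_eq)
  obtain r where r: "r \<in> carrier R" "C = I m +>\<^bsub>S\<^esub> h r"
    using assms(2) by (auto simp: quot_carrier_eq)
  have "h r' \<in> C"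
    using sub r' I'.a_rcos_self by (auto simp: quot_vimage_def)
  then have "C = I m +>\<^bsub>S\<^esub> h r'"
    using r I.a_repr_independence' by simp
  then show "C' \<subseteq> C"
    using r'(2) I_decreasing by (auto simp: a_r_coset_def')
qed (auto simp: quot_vimage_def)

theorem quot_limit_iso: "quot_limit S I \<simeq> quot_limit R J"
proof -
  have "(\<lambda>g m. quot_vimage (g m)) \<in> ring_iso (quot_limit S I) (quot_limit R J)"
    by (rule quot_limit_iso_componentwise[where A = S and B = R and I = I and J = J])
      (fact quot_vimage_iso, fact quot_vimage_subset_iff)
  then show ?thesis
    unfolding is_ring_iso_def by blast
qed

end

section \<open>The ring of integers \<open>\<int>[X]\<close>\<close>

lemma Xg_squared: "Xg ^ 2 = Xg - 3"
proof -
  have "complex_of_real (sqrt 11) ^ 2 = 11"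
    by (metis of_real_numeral of_real_power real_sqrt_pow2 zero_le_numeral)
  then show ?thesis
    unfolding Xg_def by (simp add: power2_eq_square field_simps)
qed

lemma Xg_times_one_minus_Xg: "Xg * (1 - Xg) = 3"
  using Xg_squared by (simp add: algebra_simps power2_eq_square)

lemma Xg_nonzero: "Xg \<noteq> 0"
  using Xg_times_one_minus_Xg by auto

definition O_elem :: "int \<Rightarrow> int \<Rightarrow> complex" where
  "O_elem a b = of_int a + of_int b * Xg"

lemma O_elem_eq_iff [simp]: "O_elem a b = O_elem c d \<longleftrightarrow> a = c \<and> b = d"
proof
  assume eq: "O_elem a b = O_elem c d"
  have "Im (O_elem a b) = Im (O_elem c d)" "Re (O_elem a b) = Re (O_elem c d)"
    using eq by simp_all
  then show "a = c \<and> b = d"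
    by (simp add: O_elem_def Xg_def)
qed simp

lemma O_set_eq: "O_set = {O_elem a b | a b. True}"
  by (simp add: O_set_def O_elem_def)

lemma O_elem_add: "O_elem a b + O_elem c d = O_elem (a + c) (b + d)"
  by (simp add: O_elem_def algebra_simps)

lemma O_elem_uminus: "- O_elem a b = O_elem (- a) (- b)"
  by (simp add: O_elem_def algebra_simps)

lemma O_elem_mult: "O_elem a b * O_elem c d = O_elem (a * c - 3 * b * d) (a * d + b * c + b * d)"
proof -
  have "O_elem a b * O_elem c d = of_int (a * c) + of_int (a * d + b * c) * Xg + of_int (b * d) * Xg ^ 2"
    by (simp add: O_elem_def algebra_simps power2_eq_square)
  then show ?thesis
    by (simp add: Xg_squared O_elem_def algebra_simps)
qed

lemma O_elem_of_int: "of_int n = O_elem n 0"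
  by (simp add: O_elem_def)

lemma O_elem_Xg: "Xg = O_elem 0 1"
  by (simp add: O_elem_def)

lemma O_elem_in_O_set [simp]: "O_elem a b \<in> O_set"
  by (auto simp: O_set_eq)

lemma O_set_cases [cases set: O_set]:
  assumes "z \<in> O_set"
  obtains a b where "z = O_elem a b"
  using assms by (auto simp: O_set_eq)

lemma O_set_add [simp]: "x \<in> O_set \<Longrightarrow> y \<in> O_set \<Longrightarrow> x + y \<in> O_set"
  by (auto elim!: O_set_cases simp: O_elem_add)

lemma O_set_uminus [simp]: "x \<in> O_set \<Longrightarrow> - x \<in> O_set"
  by (auto elim!: O_set_cases simp: O_elem_uminus)

lemma O_set_diff [simp]: "x \<in> O_set \<Longrightarrow> y \<in> O_set \<Longrightarrow> x - y \<in> O_set"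
  using O_set_add[of x "- y"] by simp

lemma O_set_mult [simp]: "x \<in> O_set \<Longrightarrow> y \<in> O_set \<Longrightarrow> x * y \<in> O_set"
  by (auto elim!: O_set_cases simp: O_elem_mult)

lemma O_set_of_int [simp]: "of_int n \<in> O_set"
  by (simp add: O_elem_of_int)

lemma O_set_0 [simp]: "0 \<in> O_set" and O_set_1 [simp]: "1 \<in> O_set"
  using O_set_of_int[of 0] O_set_of_int[of 1] by simp_all

lemma O_set_Xg [simp]: "Xg \<in> O_set"
  by (simp add: O_elem_Xg)

lemma O_set_power [simp]: "x \<in> O_set \<Longrightarrow> x ^ n \<in> O_set"
  by (induction n) auto

lemma O_set_sum [simp]: "(\<And>j. j \<in> A \<Longrightarrow> f j \<in> O_set) \<Longrightarrow> sum f A \<in> O_set"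
  by (induction A rule: infinite_finite_induct) auto

lemma three_dvd_if_Xg_dvd_int:
  assumes "of_int k = Xg * w" "w \<in> O_set"
  shows "3 dvd k"
proof -
  obtain c d where w: "w = O_elem c d"
    using assms(2) by (cases rule: O_set_cases)
  have "O_elem k 0 = O_elem (- 3 * d) (c + d)"
    using assms(1) by (simp add: w O_elem_Xg O_elem_mult O_elem_of_int)
  then show ?thesis by simp
qed

lemma one_minus_Xg_power_mod_Xg: "\<exists>u \<in> O_set. (1 - Xg) ^ m = 1 - Xg * u"
proof (induction m)
  case (Suc m)
  then obtain u where u: "u \<in> O_set" and eq: "(1 - Xg) ^ m = 1 - Xg * u"
    by blast
  have "(1 - Xg) ^ Suc m = 1 - Xg * (u + 1 - Xg * u)"
    by (simp only: power_Suc2 eq) (simp add: algebra_simps)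
  then show ?case
    using u by (intro bexI[of _ "u + 1 - Xg * u"]) auto
qed (auto intro: bexI[of _ 0])

lemma three_power_eq: "(3::complex) ^ m = Xg ^ m * (1 - Xg) ^ m"
  by (metis Xg_times_one_minus_Xg power_mult_distrib)

lemma Xg_power_mod_Xg_Suc_power: "\<exists>u \<in> O_set. Xg ^ m = 3 ^ m + Xg ^ Suc m * u"
proof -
  obtain u where u: "u \<in> O_set" and eq: "(1 - Xg) ^ m = 1 - Xg * u"
    using one_minus_Xg_power_mod_Xg by blast
  have "(3::complex) ^ m = Xg ^ m * (1 - Xg * u)"
    by (simp only: three_power_eq eq)
  then show ?thesis
    using u by (intro bexI[of _ u]) (simp_all add: algebra_simps)
qed

lemma O_set_int_mod_Xg_power:
  assumes "z \<in> O_set"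
  shows "\<exists>n. \<exists>x \<in> O_set. z = of_int n + x * Xg ^ m"
proof (induction m)
  case 0
  show ?case
    using assms by (intro exI[of _ 0] bexI[of _ z]) auto
next
  case (Suc m)
  then obtain n w where "w \<in> O_set" and z: "z = of_int n + w * Xg ^ m"
    by blast
  then obtain a b where w: "w = O_elem a b"
    by (cases rule: O_set_cases)
  obtain u where u: "u \<in> O_set" "Xg ^ m = 3 ^ m + Xg ^ Suc m * u"
    using Xg_power_mod_Xg_Suc_power by blast
  have "z = of_int n + of_int a * Xg ^ m + of_int b * Xg ^ Suc m"
    by (simp add: z w O_elem_def algebra_simps)
  also have "\<dots> = of_int n + of_int a * (3 ^ m + Xg ^ Suc m * u) + of_int b * Xg ^ Suc m"
    by (simp only: u(2))
  also have "\<dots> = of_int (n + a * 3 ^ m) + (of_int a * u + of_int b) * Xg ^ Suc m"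
    by (simp add: algebra_simps)
  finally show ?case
    using u(1) by (intro exI[of _ "n + a * 3 ^ m"] bexI[of _ "of_int a * u + of_int b"]) auto
qed

lemma int_in_Xg_power_multiples_iff:
  "(\<exists>x \<in> O_set. of_int n = x * Xg ^ m) \<longleftrightarrow> (3::int) ^ m dvd n"
proof
  assume "(3::int) ^ m dvd n"
  then obtain k where "n = 3 ^ m * k"
    by blast
  then have "of_int n = (of_int k * (1 - Xg) ^ m) * Xg ^ m"
    by (simp add: three_power_eq algebra_simps)
  then show "\<exists>x \<in> O_set. of_int n = x * Xg ^ m"
    by (intro bexI) auto
next
  assume "\<exists>x \<in> O_set. of_int n = x * Xg ^ m"
  then show "(3::int) ^ m dvd n"
  proof (induction m arbitrary: n)
    case (Suc m)
    then obtain x where x: "x \<in> O_set" "of_int n = x * Xg ^ Suc m"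
      by blast
    have "of_int n = (x * Xg) * Xg ^ m"
      using x(2) by (simp add: algebra_simps)
    then have "(3::int) ^ m dvd n"
      using Suc.IH x(1) by (metis O_set_Xg O_set_mult)
    then obtain k where k: "n = 3 ^ m * k" ..
    obtain u where u: "u \<in> O_set" "(1 - Xg) ^ m = 1 - Xg * u"
      using one_minus_Xg_power_mod_Xg by blast
    have "Xg ^ m * ((1 - Xg) ^ m * of_int k) = of_int n"
      by (simp add: k three_power_eq)
    also have "\<dots> = Xg ^ m * (x * Xg)"
      using x(2) by (simp add: algebra_simps)
    finally have "Xg ^ m * ((1 - Xg) ^ m * of_int k) = Xg ^ m * (x * Xg)" .
    then have "(1 - Xg) ^ m * of_int k = x * Xg"
      using Xg_nonzero by simp
    \<comment> \<open>(1 - X)^m is 1 modulo X, so X divides k\<close>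
    then have "of_int k = Xg * (x + u * of_int k)"
      by (simp add: u(2) algebra_simps)
    then have "3 dvd k"
      by (rule three_dvd_if_Xg_dvd_int) (use u(1) x(1) in auto)
    then show ?case
      unfolding k power_Suc2 by (rule mult_dvd_mono[OF dvd_refl])
  qed simp
qed

lemma O_ring_simps [simp]:
  "carrier O_ring = O_set" "x \<otimes>\<^bsub>O_ring\<^esub> y = x * y" "x \<oplus>\<^bsub>O_ring\<^esub> y = x + y"
  "\<one>\<^bsub>O_ring\<^esub> = 1" "\<zero>\<^bsub>O_ring\<^esub> = 0"
  by (simp_all add: O_ring_def)

lemma cring_O_ring: "cring O_ring"
proof (rule cringI)
  show "abelian_group O_ring"
    by (rule abelian_groupI) (auto simp: algebra_simps intro: bexI[of _ "- _"])
  show "comm_monoid O_ring"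
    by (rule comm_monoidI) (auto simp: algebra_simps)
qed (auto simp: algebra_simps)

lemma mem_PIdl_O_ring_iff: "z \<in> PIdl\<^bsub>O_ring\<^esub> a \<longleftrightarrow> (\<exists>x \<in> O_set. z = x * a)"
  by (auto simp: cgenideal_def)

lemma mem_PIdl_int_iff: "n \<in> PIdl\<^bsub>\<Z>\<^esub> k \<longleftrightarrow> k dvd n"
  by (auto simp: cgenideal_def dvd_def mult.commute)

lemma ideal_chain_pullback_int_O_ring:
  "ideal_chain_pullback \<Z> O_ring of_int (\<lambda>m. PIdl\<^bsub>\<Z>\<^esub> (3 ^ m)) (\<lambda>m. PIdl\<^bsub>O_ring\<^esub> (Xg ^ m))"
proof -
  interpret O: cring O_ring by (rule cring_O_ring)
  show ?thesis
  proof (intro ideal_chain_pullback.intro ideal_chain_pullback_axioms.intro ring_hom_ringI2)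
    show "ring \<Z>" "ring O_ring"
      by (simp_all add: int_is_cring cring.axioms(1) O.ring_axioms)
    show "of_int \<in> ring_hom \<Z> O_ring"
      by (rule ring_hom_memI) auto
    show "ideal (PIdl\<^bsub>\<Z>\<^esub> (3 ^ m)) \<Z>" for m
      by (rule cring.cgenideal_ideal[OF int_is_cring]) simp
    show "ideal (PIdl\<^bsub>O_ring\<^esub> (Xg ^ m)) O_ring" for m
      by (rule O.cgenideal_ideal) simp
    show "PIdl\<^bsub>O_ring\<^esub> (Xg ^ Suc m) \<subseteq> PIdl\<^bsub>O_ring\<^esub> (Xg ^ m)" for m
      by (auto simp: mem_PIdl_O_ring_iff intro!: bexI[of _ "_ * Xg"])
    show "{n \<in> carrier \<Z>. of_int n \<in> PIdl\<^bsub>O_ring\<^esub> (Xg ^ m)} = PIdl\<^bsub>\<Z>\<^esub> (3 ^ m)" for m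
      by (auto simp: mem_PIdl_O_ring_iff mem_PIdl_int_iff int_in_Xg_power_multiples_iff)
    show "\<exists>n \<in> carrier \<Z>. z \<in> PIdl\<^bsub>O_ring\<^esub> (Xg ^ m) +>\<^bsub>O_ring\<^esub> of_int n"
      if z: "z \<in> carrier O_ring" for z m
    proof -
      obtain n x where "x \<in> O_set" "z = of_int n + x * Xg ^ m"
        using O_set_int_mod_Xg_power[of z m] z by auto
      then have "z \<in> PIdl\<^bsub>O_ring\<^esub> (Xg ^ m) +>\<^bsub>O_ring\<^esub> of_int n"
        by (auto simp: a_r_coset_def' mem_PIdl_O_ring_iff intro!: UN_I[of "x * Xg ^ m"])
      then show ?thesis
        by blast
    qed
  qed
qed

lemma quot_limit_Xg_power_iso_Z3: "quot_limit O_ring (\<lambda>m. PIdl\<^bsub>O_ring\<^esub> (Xg ^ m)) \<simeq> Z3_ring"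
  unfolding Z3_ring_def by (rule ideal_chain_pullback.quot_limit_iso[OF ideal_chain_pullback_int_O_ring])

section \<open>Digit expansions\<close>

lemma digit_val_eq_sum:
  assumes "{j. \<alpha> j \<noteq> 0} \<subseteq> {..<N}"
  shows "digit_val \<alpha> = (\<Sum>j<N. of_int (\<alpha> j) * Xg ^ j)"
  unfolding digit_val_def using assms by (intro sum.mono_neutral_left) auto

lemma digit_val_in_O_set [simp]: "digit_val \<alpha> \<in> O_set"
  by (simp add: digit_val_def)

lemma case_nat_head_tail: "case_nat (\<alpha> 0) (\<lambda>j. \<alpha> (Suc j)) = \<alpha>"
  by (simp add: fun_eq_iff split: nat.split)

lemma digit_seq_case_nat_iff: "digit_seq (case_nat d \<alpha>) \<longleftrightarrow> d \<in> {-1, 0, 1} \<and> digit_seq \<alpha>"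
proof -
  have "finite {j. case_nat d \<alpha> j \<noteq> 0} \<longleftrightarrow> finite {j. \<alpha> j \<noteq> 0}"
    using finite_vimage_Suc_iff[of "{j. case_nat d \<alpha> j \<noteq> 0}"] by (simp add: vimage_def)
  moreover have "(\<forall>j. case_nat d \<alpha> j \<in> {-1, 0, 1}) \<longleftrightarrow> d \<in> {-1, 0, 1} \<and> (\<forall>j. \<alpha> j \<in> {-1, 0, 1})"
    by (metis nat.case nat.exhaust)
  ultimately show ?thesis
    unfolding digit_seq_def by blast
qed

lemma digit_val_case_nat:
  assumes "finite {j. \<alpha> j \<noteq> 0}"
  shows "digit_val (case_nat d \<alpha>) = of_int d + Xg * digit_val \<alpha>"
proof -
  obtain N where N: "{j. \<alpha> j \<noteq> 0} \<subseteq> {..<N}"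
    using assms finite_nat_iff_bounded by auto
  have "{j. case_nat d \<alpha> j \<noteq> 0} \<subseteq> {..<Suc N}"
  proof
    fix j assume "j \<in> {j. case_nat d \<alpha> j \<noteq> 0}"
    then show "j \<in> {..<Suc N}"
      using N by (cases j) auto
  qed
  then have "digit_val (case_nat d \<alpha>) = (\<Sum>j<Suc N. of_int (case_nat d \<alpha> j) * Xg ^ j)"
    by (rule digit_val_eq_sum)
  also have "\<dots> = of_int d + Xg * (\<Sum>j<N. of_int (\<alpha> j) * Xg ^ j)"
    unfolding sum.lessThan_Suc_shift by (simp add: sum_distrib_left algebra_simps)
  also have "\<dots> = of_int d + Xg * digit_val \<alpha>"
    using N by (simp add: digit_val_eq_sum)
  finally show ?thesis .
qed

lemma digit_val_head_tail:
  assumes "digit_seq \<alpha>"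
  shows "digit_seq (\<lambda>j. \<alpha> (Suc j))"
    and "digit_val \<alpha> = of_int (\<alpha> 0) + Xg * digit_val (\<lambda>j. \<alpha> (Suc j))"
  using assms digit_seq_case_nat_iff[of "\<alpha> 0" "\<lambda>j. \<alpha> (Suc j)"]
    digit_val_case_nat[of "\<lambda>j. \<alpha> (Suc j)" "\<alpha> 0"]
  by (simp_all add: case_nat_head_tail digit_seq_def)

lemma digit_val_eq_imp_head_tail_eq:
  assumes "digit_seq \<alpha>" "digit_seq \<beta>" "digit_val \<alpha> = digit_val \<beta>"
  shows "\<alpha> 0 = \<beta> 0" and "digit_val (\<lambda>j. \<alpha> (Suc j)) = digit_val (\<lambda>j. \<beta> (Suc j))"
proof -
  let ?v = "digit_val (\<lambda>j. \<alpha> (Suc j))" and ?w = "digit_val (\<lambda>j. \<beta> (Suc j))"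
  have eq: "of_int (\<alpha> 0) + Xg * ?v = of_int (\<beta> 0) + Xg * ?w"
    using assms digit_val_head_tail(2) by metis
  then have "of_int (\<alpha> 0 - \<beta> 0) = Xg * (?w - ?v)"
    by (simp add: algebra_simps)
  then have "3 dvd \<alpha> 0 - \<beta> 0"
    by (rule three_dvd_if_Xg_dvd_int) simp
  moreover have "\<alpha> 0 \<in> {-1, 0, 1}" "\<beta> 0 \<in> {-1, 0, 1}"
    using assms(1,2) by (simp_all add: digit_seq_def)
  ultimately show "\<alpha> 0 = \<beta> 0"
    by auto
  with eq show "?v = ?w"
    using Xg_nonzero by simp
qed

lemma digit_val_inj:
  assumes "digit_seq \<alpha>" "digit_seq \<beta>" "digit_val \<alpha> = digit_val \<beta>"
  shows "\<alpha> = \<beta>"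
proof
  fix j
  show "\<alpha> j = \<beta> j"
    using assms
  proof (induction j arbitrary: \<alpha> \<beta>)
    case 0
    then show ?case
      by (rule digit_val_eq_imp_head_tail_eq)
  next
    case (Suc j)
    then show ?case
      using Suc.IH[OF digit_val_head_tail(1) digit_val_head_tail(1)] digit_val_eq_imp_head_tail_eq(2)
      by blast
  qed
qed

(* N(a + b X) = |a + b X|^2 *)
definition O_norm :: "int \<Rightarrow> int \<Rightarrow> int" where
  "O_norm a b = a\<^sup>2 + a * b + 3 * b\<^sup>2"

lemma four_O_norm: "4 * O_norm a b = (2 * a + b)\<^sup>2 + 11 * b\<^sup>2"
  by (simp add: O_norm_def power2_eq_square algebra_simps)

lemma O_norm_nonneg: "0 \<le> O_norm a b"
proof -
  have "0 \<le> (2 * a + b)\<^sup>2 + 11 * b\<^sup>2"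
    by simp
  then show ?thesis
    using four_O_norm[of a b] by linarith
qed

lemma O_norm_le_one:
  assumes "O_norm a b \<le> 1"
  shows "b = 0" and "a \<in> {-1, 0, 1}"
proof -
  show "b = 0"
  proof (rule ccontr)
    assume "b \<noteq> 0"
    then have "0 < b\<^sup>2" "0 \<le> (2 * a + b)\<^sup>2"
      by simp_all
    then show False
      using four_O_norm[of a b] assms by linarith
  qed
  with assms have "a\<^sup>2 \<le> 1"
    by (simp add: O_norm_def)
  then have "\<bar>a\<bar> \<le> 1"
    by (metis abs_le_square_iff power_one abs_one)
  then show "a \<in> {-1, 0, 1}"
    by auto
qed

lemma O_norm_digit_step_less:
  assumes d: "d \<in> {-1, 0, 1}" and N: "2 \<le> O_norm (d - 3 * e) (c + e)"
  shows "O_norm c e < O_norm (d - 3 * e) (c + e)"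
proof -
  define a b where "a = d - 3 * e" and "b = c + e"
  define s where "s = 2 * a + b"
  \<comment> \<open>a + b X - d = X (c + e X) and N(X) = 3\<close>
  have step: "3 * O_norm c e = O_norm a b - d * s + d\<^sup>2"
    unfolding s_def a_def b_def O_norm_def by (simp add: power2_eq_square algebra_simps)
  have "- d * s + d\<^sup>2 \<le> \<bar>s\<bar> + 1"
    using d by auto
  moreover have "\<bar>s\<bar> + 1 < 2 * O_norm a b"
  proof (cases "\<bar>s\<bar> \<le> 2")
    case True
    then show ?thesis
      using N by (simp add: a_def b_def)
  next
    case False
    have "3 * \<bar>s\<bar> \<le> \<bar>s\<bar> * \<bar>s\<bar>"
      using False by (intro mult_right_mono) auto
    moreover have "\<bar>s\<bar> * \<bar>s\<bar> \<le> 4 * O_norm a b"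
      using four_O_norm[of a b] by (simp add: s_def power2_eq_square flip: abs_mult)
    ultimately show ?thesis
      using False by linarith
  qed
  ultimately show ?thesis
    using step by (simp add: a_def b_def)
qed

lemma O_elem_digit_step: "O_elem (d - 3 * e) (c + e) = of_int d + Xg * O_elem c e"
  by (simp add: O_elem_Xg O_elem_mult O_elem_of_int O_elem_add)

lemma exists_digit_seq: "\<exists>\<alpha>. digit_seq \<alpha> \<and> digit_val \<alpha> = O_elem a b"
proof (induction "nat (O_norm a b)" arbitrary: a b rule: less_induct)
  case less
  show ?case
  proof (cases "O_norm a b \<le> 1")
    case True
    then have "b = 0" "a \<in> {-1, 0, 1}"
      by (rule O_norm_le_one)+
    moreover have "digit_seq (\<lambda>_. 0)" "digit_val (\<lambda>_. 0) = 0"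
      by (simp_all add: digit_seq_def digit_val_def)
    ultimately show ?thesis
      by (intro exI[of _ "case_nat a (\<lambda>_. 0)"])
        (simp add: digit_seq_case_nat_iff digit_val_case_nat O_elem_def)
  next
    case False
    define d where "d = (a + 1) mod 3 - 1"
    define e where "e = - ((a + 1) div 3)"
    have d: "d \<in> {-1, 0, 1}"
      using pos_mod_sign[of 3 "a + 1"] pos_mod_bound[of 3 "a + 1"] by (auto simp: d_def)
    have a: "a = d - 3 * e"
      unfolding d_def e_def by presburger
    define c where "c = b - e"
    then have b: "b = c + e"
      by simp
    have "O_norm c e < O_norm a b"
      using O_norm_digit_step_less[OF d] False by (simp add: a b)
    then obtain \<beta> where \<beta>: "digit_seq \<beta>" "digit_val \<beta> = O_elem c e"
      using less O_norm_nonneg[of c e] by fastforce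
    have "digit_seq (case_nat d \<beta>)"
      using d \<beta>(1) by (simp add: digit_seq_case_nat_iff)
    moreover have "digit_val (case_nat d \<beta>) = O_elem a b"
      using \<beta> by (simp add: digit_val_case_nat digit_seq_def a b O_elem_digit_step)
    ultimately show ?thesis
      by blast
  qed
qed

lemma digit_expansion_exists_unique: "z \<in> O_set \<Longrightarrow> \<exists>!\<alpha>. digit_seq \<alpha> \<and> z = digit_val \<alpha>"
  by (metis O_set_cases exists_digit_seq digit_val_inj)

lemma hold_digits:
  "digit_seq (\<lambda>j. if j = 0 then -1 else if j = 1 then 1 else if j = 2 then -1 else 0)"
  "digit_val (\<lambda>j. if j = 0 then -1 else if j = 1 then 1 else if j = 2 then -1 else 0) = -1 + Xg - Xg ^ 2"
proof -
  let ?\<alpha> = "\<lambda>j::nat. if j = 0 then -1 else if j = 1 then 1 else if j = 2 then -1 else (0::int)"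
  have support: "{j. ?\<alpha> j \<noteq> 0} \<subseteq> {..<3}"
    by auto
  then show "digit_seq ?\<alpha>"
    by (auto simp: digit_seq_def intro: finite_subset)
  show "digit_val ?\<alpha> = -1 + Xg - Xg ^ 2"
    by (simp add: digit_val_eq_sum[OF support] numeral_3_eq_3 power2_eq_square)
qed

theorem proposition6p6:
  shows "(\<forall>z\<in>O_set. \<exists>!\<alpha>. digit_seq \<alpha> \<and> z = digit_val \<alpha>)
    \<and> (1 + 1 :: complex) = -1 + Xg - Xg ^ 2
    \<and> (THE \<alpha>. digit_seq \<alpha> \<and> digit_val \<alpha> = 1 + 1) = (\<lambda>j. if j = 0 then -1 else if j = 1 then 1 else if j = 2 then -1 else 0)
    \<and> quot_limit O_ring (\<lambda>m. PIdl\<^bsub>O_ring\<^esub> (Xg ^ m)) \<simeq> Z3_ring"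
proof (intro conjI ballI)
  show "\<exists>!\<alpha>. digit_seq \<alpha> \<and> z = digit_val \<alpha>" if "z \<in> O_set" for z
    using that by (rule digit_expansion_exists_unique)
  show hold: "(1 + 1 :: complex) = -1 + Xg - Xg ^ 2"
    by (simp add: Xg_squared)
  show "(THE \<alpha>. digit_seq \<alpha> \<and> digit_val \<alpha> = 1 + 1) = (\<lambda>j. if j = 0 then -1 else if j = 1 then 1 else if j = 2 then -1 else 0)"
    using hold_digits hold by (intro the_equality) (auto intro: digit_val_inj)
  show "quot_limit O_ring (\<lambda>m. PIdl\<^bsub>O_ring\<^esub> (Xg ^ m)) \<simeq> Z3_ring"
    by (rule quot_limit_Xg_power_iso_Z3)
qed

end
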